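(* Let $J$ be a positive integer, $\Delta>0$, and $w_j=(j-\tfrac12)\Delta$ for $j=1,\dots,J$. For $x\in(0,1]$, $w\in\mathbb R$ and $j\in\{1,\dots,J\}$ define $\tau(x,w,j)\in\mathbb R^2$ by $$\tau(x,w,j)=\left[\cos(w\ln x)\sqrt{2x\int_{(j-1)\Delta}^{j\Delta}\rho(w')dw'},\ \sin(w\ln x)\sqrt{2x\int_{(j-1)\Delta}^{j\Delta}\rho(w')dw'}\right].$$ Then for all $x,y\in(0,1]$, $$\left|\int_{-\Delta J}^{\Delta J}\Phi_w(x)^*\Phi_w(y)\,dw-\left\langle\bigoplus_{j=1}^J\tau(x,w_j,j),\ \bigoplus_{j=1}^J\tau(y,w_j,j)\right\rangle\right|\le 2\Delta,$$ where $\bigoplus$ denotes concatenation of vectors and $\langle\cdot,\cdot\rangle$ the Euclidean inner product.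
   Context: $\rho(w)=\frac{2\,\mathrm{sech}(\pi w)}{1+4w^2}$; $\Phi_w(x)=e^{-iw\ln x}\sqrt{x\rho(w)}$; ${}^*$ denotes complex conjugation. *)

theory Defs
  imports "HOL-Analysis.Analysis"
begin

definition rho :: "real \<Rightarrow> real" where
  "rho w = 2 * (1 / cosh (pi * w)) / (1 + 4 * w^2)"

definition Phi :: "real \<Rightarrow> real \<Rightarrow> complex" where
  "Phi w x = exp (- \<i> * complex_of_real (w * ln x)) * complex_of_real (sqrt (x * rho w))"

definition tau :: "real \<Rightarrow> real \<Rightarrow> real \<Rightarrow> nat \<Rightarrow> real \<times> real" where
  "tau \<Delta> x w j =
     (let s = sqrt (2 * x * integral {(real j - 1) * \<Delta> .. real j * \<Delta>} rho)
      in (cos (w * ln x) * s, sin (w * ln x) * s))"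

definition tau_concat :: "real \<Rightarrow> nat \<Rightarrow> real \<Rightarrow> real list" where
  "tau_concat \<Delta> J x =
     concat (map (\<lambda>j. let v = tau \<Delta> x ((real j - 1/2) * \<Delta>) j in [fst v, snd v]) [1..<J+1])"

definition list_inner :: "real list \<Rightarrow> real list \<Rightarrow> real" where
  "list_inner u v = sum_list (map2 (*) u v)"

end

theory Submission
  imports Defs
begin

text \<open>
  Pairing \<open>w\<close> with \<open>-w\<close> (\<open>\<rho>\<close> is even) turns the integral into \<open>2 sqrt(x y)\<close> times
  \<open>I = \<integral> \<rho>(w) cos(w L) dw\<close> over \<open>[0, J \<Delta>]\<close>, where \<open>L = ln x - ln y\<close>, and the inner product into
  \<open>2 sqrt(x y)\<close> times the midpoint-rule approximation \<open>\<Sum>\<^sub>j cos(w\<^sub>j L) \<integral>\<rho>\<close> of \<open>I\<close>, the inner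
  integrals taken over the bins \<open>[(j - 1) \<Delta>, j \<Delta>]\<close>. Since \<open>cos\<close> is 1-Lipschitz, on each bin
  \<open>cos(w L)\<close> deviates from \<open>cos(w\<^sub>j L)\<close> by at most \<open>|L| \<Delta> / 2\<close>, so the error is at most
  \<open>sqrt(x y) |L| \<Delta> \<integral>\<rho>\<close>. Finally \<open>\<integral>\<rho>\<close> over \<open>[0, \<infinity>)\<close> is below
  \<open>\<integral> 2 / (1 + 4 w\<^sup>2) = \<pi> / 2 < 2\<close>, and \<open>sqrt(x y) |ln x - ln y| \<le> sqrt t (- ln t) \<le> 1\<close> for
  \<open>t = min x y \<le> 1\<close>.
\<close>

lemma rho_pos: "rho w > 0"
  unfolding rho_def by (intro divide_pos_pos mult_pos_pos) (auto intro: add_pos_nonneg)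

lemma rho_minus: "rho (-w) = rho w"
  unfolding rho_def by simp

lemma continuous_on_rho: "continuous_on S rho"
  unfolding rho_def
  by (intro continuous_intros) (auto simp: add_pos_nonneg intro!: order.strict_implies_not_eq[symmetric])

lemma integral_rho_nonneg: "integral {a..b} rho \<ge> 0"
  by (rule integral_nonneg[OF integrable_continuous_real[OF continuous_on_rho]])
    (auto intro: less_imp_le[OF rho_pos])

lemma rho_le: "rho w \<le> 2 / (1 + 4 * w^2)"
proof -
  have "2 * (1 / cosh (pi * w)) \<le> 2"
    using cosh_real_ge_1[of "pi * w"] by (simp add: divide_le_eq)
  then show ?thesis
    unfolding rho_def by (intro divide_right_mono) (auto intro: add_nonneg_nonneg)
qed

lemma has_integral_arctan_double:
  fixes a b :: real
  assumes "a \<le> b"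
  shows "((\<lambda>w. 2 / (1 + 4 * w^2)) has_integral (arctan (2 * b) - arctan (2 * a))) {a..b}"
proof -
  have "((\<lambda>w. arctan (2 * w)) has_vector_derivative 2 / (1 + 4 * w^2)) (at w within {a..b})" for w
  proof -
    have "((\<lambda>w. arctan (2 * w)) has_real_derivative inverse (1 + (2 * w)^2) * 2) (at w within {a..b})"
      by (rule DERIV_chain2[OF DERIV_arctan]) (auto intro!: derivative_eq_intros)
    then show ?thesis
      by (simp add: has_real_derivative_iff_has_vector_derivative[symmetric] field_simps power2_eq_square)
  qed
  then show ?thesis
    using assms by (intro fundamental_theorem_of_calculus) auto
qed

lemma integral_rho_less:
  assumes "0 \<le> b"
  shows "integral {0..b} rho < pi / 2"
proof -
  have "integral {0..b} rho \<le> integral {0..b} (\<lambda>w. 2 / (1 + 4 * w^2))"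
    using rho_le has_integral_arctan_double[OF assms]
    by (intro integral_le integrable_continuous_real[OF continuous_on_rho])
      (auto intro: has_integral_integrable)
  also have "\<dots> = arctan (2 * b)"
    using has_integral_arctan_double[OF assms] by (simp add: integral_unique)
  also have "\<dots> < pi / 2"
    by (rule arctan_ubound)
  finally show ?thesis .
qed

lemma abs_cos_diff_le: "\<bar>cos a - cos b\<bar> \<le> \<bar>a - b\<bar>" for a b :: real
proof -
  have "\<bar>cos a - cos b\<bar> = 2 * \<bar>sin ((a + b) / 2)\<bar> * \<bar>sin ((b - a) / 2)\<bar>"
    by (simp add: cos_diff_cos abs_mult)
  also have "\<dots> \<le> 2 * 1 * \<bar>(b - a) / 2\<bar>"
    by (intro mult_mono abs_sin_x_le_abs_x) auto
  finally show ?thesis by simp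
qed

lemma sqrt_mult_minus_ln_le_1:
  fixes t :: real
  assumes "0 < t" "t \<le> 1"
  shows "sqrt t * (- ln t) \<le> 1"
proof -
  define u where "u = - ln t / 2"
  have "u \<ge> 0" using assms by (simp add: u_def)
  have "sqrt t = exp (-u)"
    using assms by (simp add: u_def sqrt_def root_powr_inverse ln_sqrt powr_def)
  then have "sqrt t * (- ln t) = 2 * u * exp (-u)"
    by (simp add: u_def)
  also have "\<dots> \<le> 1"
  proof -
    have "1 + u + u^2 / 2 \<le> exp u"
      using exp_lower_Taylor_quadratic \<open>u \<ge> 0\<close> by simp
    moreover have "0 \<le> (u - 1)^2" by simp
    ultimately have "2 * u \<le> exp u"
      by (simp add: power2_eq_square algebra_simps)
    then show ?thesis by (simp add: exp_minus field_simps)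
  qed
  finally show ?thesis .
qed

lemma sqrt_mult_abs_ln_diff_le_1:
  fixes x y :: real
  assumes "x \<in> {0<..1}" "y \<in> {0<..1}"
  shows "sqrt (x * y) * \<bar>ln x - ln y\<bar> \<le> 1"
proof -
  have ordered: "sqrt (x * y) * \<bar>ln x - ln y\<bar> \<le> 1" if "0 < x" "x \<le> y" "y \<le> 1" for x y :: real
  proof -
    have "sqrt (x * y) * \<bar>ln x - ln y\<bar> \<le> sqrt x * (- ln x)"
      using that by (intro mult_mono) (auto simp: real_sqrt_mult mult_left_le abs_if)
    also have "\<dots> \<le> 1"
      using sqrt_mult_minus_ln_le_1 that by simp
    finally show ?thesis .
  qed
  show ?thesis
    using ordered[of x y] ordered[of y x] assms
    by (cases "x \<le> y") (auto simp: mult.commute abs_minus_commute)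
qed

lemma integral_symmetric_interval:
  fixes h :: "real \<Rightarrow> 'a::banach"
  assumes h: "continuous_on {-a..a} h" and "0 \<le> a"
  shows "integral {-a..a} h = integral {0..a} (\<lambda>w. h w + h (-w))"
proof -
  have "continuous_on {0..a} (\<lambda>w. h (-w))"
    by (rule continuous_on_compose2[OF h]) (auto intro: continuous_intros)
  then have reflected: "(\<lambda>w. h (-w)) integrable_on {0..a}"
    by (rule integrable_continuous_real)
  have whole: "h integrable_on {-a..a}"
    using h by (rule integrable_continuous_real)
  then have "integral {-a..a} h = integral {-a..0} h + integral {0..a} h"
    using assms(2) by (intro Henstock_Kurzweil_Integration.integral_combine[symmetric]) auto
  also have "integral {-a..0} h = integral {0..a} (\<lambda>w. h (-w))"
    using Henstock_Kurzweil_Integration.integral_reflect_real[where f="\<lambda>w. h (-w)" and a=0 and b=a]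
    by simp
  finally show ?thesis
    using reflected integrable_subinterval_real[OF whole] assms(2)
    by (simp add: integral_add add.commute)
qed

lemma integral_weighted_deviation_le:
  fixes f g :: "real \<Rightarrow> real"
  assumes f: "f integrable_on S" "\<And>w. w \<in> S \<Longrightarrow> 0 \<le> f w"
    and fg: "(\<lambda>w. f w * g w) integrable_on S"
    and dev: "\<And>w. w \<in> S \<Longrightarrow> \<bar>g w - c\<bar> \<le> M"
  shows "\<bar>integral S (\<lambda>w. f w * g w) - c * integral S f\<bar> \<le> M * integral S f"
proof -
  have "integral S (\<lambda>w. f w * g w) - c * integral S f = integral S (\<lambda>w. f w * (g w - c))"
  proof -
    have "(\<lambda>w. c * f w) integrable_on S" using f(1) by (rule integrable_on_mult_right)
    then show ?thesis
      using fg by (simp add: right_diff_distrib integral_diff mult.commute)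
  qed
  also have "norm \<dots> \<le> integral S (\<lambda>w. M * f w)"
  proof (rule integral_norm_bound_integral)
    show "(\<lambda>w. f w * (g w - c)) integrable_on S"
      using f(1) fg by (simp add: right_diff_distrib integrable_diff integrable_on_mult_left)
    show "(\<lambda>w. M * f w) integrable_on S" using f(1) by (rule integrable_on_mult_right)
    fix w assume w: "w \<in> S"
    then show "norm (f w * (g w - c)) \<le> M * f w"
      using mult_left_mono[OF dev[OF w] f(2)[OF w]] f(2)[OF w] by (simp add: abs_mult mult.commute)
  qed
  finally show ?thesis by (simp add: integral_mult_right)
qed

lemma midpoint_rule_cos_error:
  fixes f :: "real \<Rightarrow> real" and \<Delta> L :: real
  assumes f: "continuous_on UNIV f" "\<And>w. 0 \<le> f w" and "0 \<le> \<Delta>"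
  shows "\<bar>integral {0..real n * \<Delta>} (\<lambda>w. f w * cos (w * L))
           - (\<Sum>j\<in>{1..n}. cos ((real j - 1/2) * \<Delta> * L) * integral {(real j - 1) * \<Delta>..real j * \<Delta>} f)\<bar>
         \<le> \<bar>L\<bar> * \<Delta> / 2 * integral {0..real n * \<Delta>} f"
proof (induction n)
  case 0
  then show ?case by simp
next
  case (Suc n)
  define c d m where "c = real n * \<Delta>" and "d = real (Suc n) * \<Delta>" and "m = (real (Suc n) - 1/2) * \<Delta>"
  have integrable: "g integrable_on {a..b}" if "continuous_on UNIV g" for g :: "real \<Rightarrow> real" and a b
    using continuous_on_subset[OF that] by (intro integrable_continuous_real) auto
  have split: "integral {0..d} g = integral {0..c} g + integral {c..d} g"
    if "continuous_on UNIV g" for g :: "real \<Rightarrow> real"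
    using assms(3) integrable[OF that]
    by (intro Henstock_Kurzweil_Integration.integral_combine[symmetric])
      (auto simp: c_def d_def intro!: mult_right_mono)
  have cont: "continuous_on UNIV (\<lambda>w. f w * cos (w * L))"
    using f(1) by (intro continuous_intros)
  have bin: "\<bar>integral {c..d} (\<lambda>w. f w * cos (w * L)) - cos (m * L) * integral {c..d} f\<bar>
      \<le> \<bar>L\<bar> * \<Delta> / 2 * integral {c..d} f"
  proof (rule integral_weighted_deviation_le[OF integrable[OF f(1)] f(2) integrable[OF cont]])
    fix w assume "w \<in> {c..d}"
    then have "\<bar>w - m\<bar> \<le> \<Delta> / 2"
      by (auto simp: c_def d_def m_def algebra_simps abs_if)
    then have "\<bar>L\<bar> * \<bar>w - m\<bar> \<le> \<bar>L\<bar> * (\<Delta> / 2)"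
      by (intro mult_left_mono) auto
    moreover have "\<bar>w * L - m * L\<bar> = \<bar>L\<bar> * \<bar>w - m\<bar>"
      by (simp add: abs_mult flip: left_diff_distrib)
    ultimately show "\<bar>cos (w * L) - cos (m * L)\<bar> \<le> \<bar>L\<bar> * \<Delta> / 2"
      using abs_cos_diff_le[of "w * L" "m * L"] by simp
  qed
  have sum: "(\<Sum>j\<in>{1..Suc n}. cos ((real j - 1/2) * \<Delta> * L) * integral {(real j - 1) * \<Delta>..real j * \<Delta>} f)
      = (\<Sum>j\<in>{1..n}. cos ((real j - 1/2) * \<Delta> * L) * integral {(real j - 1) * \<Delta>..real j * \<Delta>} f)
        + cos (m * L) * integral {c..d} f"
    by (simp add: c_def d_def m_def)
  show ?case
    unfolding d_def[symmetric] split[OF cont] split[OF f(1)] sum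
    using Suc.IH bin unfolding c_def[symmetric]
    by (simp only: abs_le_iff distrib_left) linarith
qed

lemma Phi_cnj_mult:
  assumes "x > 0" "y > 0"
  shows "cnj (Phi w x) * Phi w y = complex_of_real (sqrt (x * y) * rho w) * cis (w * (ln x - ln y))"
proof -
  have "sqrt (x * rho w) * sqrt (y * rho w) = sqrt (x * y) * rho w"
    using assms rho_pos[of w] by (simp add: real_sqrt_mult)
  moreover have "cnj (Phi w x) * Phi w y
      = complex_of_real (sqrt (x * rho w) * sqrt (y * rho w)) * (cis (w * ln x) * cis (- (w * ln y)))"
    unfolding Phi_def by (simp add: exp_cnj cis_conv_exp algebra_simps)
  ultimately show ?thesis
    by (simp add: cis_mult right_diff_distrib)
qed

lemma Phi_cnj_mult_add_minus:
  assumes "x > 0" "y > 0"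
  shows "cnj (Phi w x) * Phi w y + cnj (Phi (-w) x) * Phi (-w) y
     = complex_of_real (2 * sqrt (x * y) * (rho w * cos (w * (ln x - ln y))))"
  using assms by (simp add: Phi_cnj_mult rho_minus complex_eq_iff)

lemma integral_Phi_kernel:
  assumes "x > 0" "y > 0" "a \<ge> 0"
  shows "integral {-a..a} (\<lambda>w. cnj (Phi w x) * Phi w y)
       = complex_of_real (2 * sqrt (x * y) * integral {0..a} (\<lambda>w. rho w * cos (w * (ln x - ln y))))"
proof -
  have "continuous_on {-a..a} (\<lambda>w. cnj (Phi w x) * Phi w y)"
    unfolding Phi_def by (intro continuous_intros continuous_on_rho)
  then have "integral {-a..a} (\<lambda>w. cnj (Phi w x) * Phi w y)
      = integral {0..a} (\<lambda>w. complex_of_real (2 * sqrt (x * y) * (rho w * cos (w * (ln x - ln y)))))"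
    using assms by (simp add: integral_symmetric_interval Phi_cnj_mult_add_minus)
  also have "\<dots> = complex_of_real (integral {0..a} (\<lambda>w. 2 * sqrt (x * y) * (rho w * cos (w * (ln x - ln y)))))"
    by (intro integral_unique has_integral_of_real integrable_integral integrable_continuous_real
        continuous_intros continuous_on_rho)
  finally show ?thesis by simp
qed

lemma list_inner_concat_pairs:
  "list_inner (concat (map (\<lambda>j. [a j, b j]) xs)) (concat (map (\<lambda>j. [c j, d j]) xs))
   = (\<Sum>j\<leftarrow>xs. a j * c j + b j * d j)"
  by (induction xs) (auto simp: list_inner_def)

lemma list_inner_tau_concat:
  assumes "x > 0" "y > 0"
  shows "list_inner (tau_concat \<Delta> J x) (tau_concat \<Delta> J y)
     = 2 * sqrt (x * y) * (\<Sum>j\<in>{1..J}. cos ((real j - 1/2) * \<Delta> * (ln x - ln y))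
                                        * integral {(real j - 1) * \<Delta>..real j * \<Delta>} rho)"
proof -
  have pair: "fst (tau \<Delta> x w j) * fst (tau \<Delta> y w j) + snd (tau \<Delta> x w j) * snd (tau \<Delta> y w j)
      = 2 * sqrt (x * y) * (cos (w * (ln x - ln y)) * integral {(real j - 1) * \<Delta>..real j * \<Delta>} rho)"
    for w j
  proof -
    define I where "I = integral {(real j - 1) * \<Delta>..real j * \<Delta>} rho"
    have "sqrt (2 * x * I) * sqrt (2 * y * I) = 2 * sqrt (x * y) * I"
      using integral_rho_nonneg[of "(real j - 1) * \<Delta>" "real j * \<Delta>"] assms
      by (simp add: I_def real_sqrt_mult[symmetric] algebra_simps power2_eq_square[symmetric])
        (simp add: real_sqrt_mult)
    then show ?thesis
      unfolding tau_def Let_def I_def[symmetric]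
      by (simp add: cos_diff right_diff_distrib algebra_simps)
  qed
  have "set [1..<J+1] = {1..J}" by auto
  then show ?thesis
    unfolding tau_concat_def Let_def list_inner_concat_pairs pair
    by (simp only: sum_set_upt_conv_sum_list_nat[symmetric] sum_distrib_left)
qed

theorem lemma5:
  fixes J :: nat and \<Delta> x y :: real
  assumes "J > 0" and "\<Delta> > 0"
    and "x \<in> {0<..1}" and "y \<in> {0<..1}"
  shows "cmod (integral {- \<Delta> * real J .. \<Delta> * real J} (\<lambda>w. cnj (Phi w x) * Phi w y)
               - complex_of_real (list_inner (tau_concat \<Delta> J x) (tau_concat \<Delta> J y)))
         \<le> 2 * \<Delta>"
proof -
  have x: "x > 0" and y: "y > 0" using assms by auto
  define K L where "K = sqrt (x * y)" and "L = ln x - ln y"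
  have K: "K \<ge> 0" using x y by (simp add: K_def)
  define E where "E = integral {0..real J * \<Delta>} (\<lambda>w. rho w * cos (w * L))
      - (\<Sum>j\<in>{1..J}. cos ((real j - 1/2) * \<Delta> * L) * integral {(real j - 1) * \<Delta>..real j * \<Delta>} rho)"
  have "integral {- \<Delta> * real J .. \<Delta> * real J} (\<lambda>w. cnj (Phi w x) * Phi w y)
        - complex_of_real (list_inner (tau_concat \<Delta> J x) (tau_concat \<Delta> J y))
      = complex_of_real (2 * K * E)"
    using integral_Phi_kernel[OF x y, of "\<Delta> * real J"] list_inner_tau_concat[OF x y] assms(2)
    by (simp add: E_def K_def L_def mult.commute right_diff_distrib)
  then have "cmod (integral {- \<Delta> * real J .. \<Delta> * real J} (\<lambda>w. cnj (Phi w x) * Phi w y)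
        - complex_of_real (list_inner (tau_concat \<Delta> J x) (tau_concat \<Delta> J y)))
      = 2 * K * \<bar>E\<bar>"
    using K by (simp add: norm_mult abs_mult)
  also have "\<dots> \<le> 2 * K * (\<bar>L\<bar> * \<Delta> / 2 * integral {0..real J * \<Delta>} rho)"
    unfolding E_def using K assms(2) continuous_on_rho less_imp_le[OF rho_pos]
    by (intro mult_left_mono midpoint_rule_cos_error) auto
  also have "\<dots> = (K * \<bar>L\<bar>) * \<Delta> * integral {0..real J * \<Delta>} rho"
    by simp
  also have "\<dots> \<le> 1 * \<Delta> * 2"
  proof (intro mult_mono)
    show "K * \<bar>L\<bar> \<le> 1"
      unfolding K_def L_def using assms(3,4) by (rule sqrt_mult_abs_ln_diff_le_1)
    show "integral {0..real J * \<Delta>} rho \<le> 2"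
      using integral_rho_less[of "real J * \<Delta>"] assms(2) pi_less_4 by simp
  qed (use K assms(2) integral_rho_nonneg in auto)
  finally show ?thesis by simp
qed

end
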